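(* Let $a<b$ be real numbers and $(R_n)_{n\ge0}$ a sequence of real polynomials such that: (a) $R_0$ is a constant and $R_1$ has degree $1$; (b) there exist $\alpha,\beta\in\mathbb{R}$, $\alpha\ne0$, with $R_n=(\alpha X+\beta)R_{n-1}-R_{n-2}$ for all $n\ge2$; (c) either (i) $R_n(a)R_{n+1}(a)>0$ and $R_n(b)R_{n+1}(b)<0$ for all $n\ge0$, or (ii) $R_n(a)R_{n+1}(a)<0$ and $R_n(b)R_{n+1}(b)>0$ for all $n\ge0$. Then: (1) $\deg R_n=n$; (2) all roots of $R_n$ are real, simple and lie in $(a,b)$: $a<x^{(n)}_1<\cdots<x^{(n)}_n<b$; (3) the roots of $R_{n+1}$ interlace those of $R_n$: $a<x^{(n+1)}_1<x^{(n)}_1<x^{(n+1)}_2<\cdots<x^{(n)}_n<x^{(n+1)}_{n+1}<b$. *)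

theory Defs
  imports "HOL-Computational_Algebra.Polynomial"
begin

end

theory Submission
  imports Defs
begin

text \<open>
  Induction on \<open>n\<close>, carrying the invariant that \<open>R n\<close> and \<open>R (n + 1)\<close> split into simple
  roots in \<open>(a, b)\<close> whose orders interlace. At a root \<open>y\<close> of \<open>R (n + 1)\<close> the recurrence
  gives \<open>R (n + 2) y = - R n y\<close>, and \<open>R n\<close> changes sign exactly once between two consecutive
  roots of \<open>R (n + 1)\<close>, so \<open>R (n + 2)\<close> has a root in each of these \<open>n\<close> gaps. The sign
  hypotheses make \<open>R n\<close> and \<open>R (n + 2)\<close> agree in sign at \<open>a\<close> and at \<open>b\<close>, which yields one
  more root below the smallest and one above the largest root of \<open>R (n + 1)\<close>. These are
  \<open>n + 2 = deg R (n + 2)\<close> roots, hence all of them.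
\<close>

lemma prod_linear_factors_dvd:
  fixes p :: "real poly"
  assumes "finite S" "\<forall>s\<in>S. poly p s = 0"
  shows "(\<Prod>s\<in>S. [:-s, 1:]) dvd p"
  using assms
proof (induction S arbitrary: p rule: finite_induct)
  case empty
  then show ?case by simp
next
  case (insert s S)
  have "(\<Prod>s\<in>S. [:-s, 1:]) dvd p"
    using insert.IH insert.prems by simp
  then obtain q where q: "p = (\<Prod>s\<in>S. [:-s, 1:]) * q"
    by (rule dvdE)
  have "poly (\<Prod>s\<in>S. [:-s, 1:]) s \<noteq> 0"
    using insert.hyps by (auto simp: poly_prod prod_zero_iff)
  with q insert.prems have "[:-s, 1:] dvd q"
    by (simp add: poly_eq_0_iff_dvd)
  then have "[:-s, 1:] * (\<Prod>s\<in>S. [:-s, 1:]) dvd p"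
    unfolding q by (metis mult.commute mult_dvd_mono dvd_refl)
  then show ?case
    using insert.hyps by simp
qed

lemma poly_eq_smult_prod_roots:
  fixes p :: "real poly"
  assumes "finite S" "\<forall>s\<in>S. poly p s = 0" "degree p = card S"
  shows "p = smult (lead_coeff p) (\<Prod>s\<in>S. [:-s, 1:])"
proof -
  let ?P = "\<Prod>s\<in>S. [:-s, 1:]"
  obtain q where q: "p = ?P * q"
    using prod_linear_factors_dvd[OF assms(1,2)] by (rule dvdE)
  have lead_P: "lead_coeff ?P = 1"
    by (simp add: lead_coeff_prod)
  have deg_P: "degree ?P = card S"
    using assms(1) by (subst degree_prod_sum_eq) auto
  show ?thesis
  proof (cases "q = 0")
    case False
    have "?P \<noteq> 0"
      using lead_P by auto
    with q False have "degree p = card S + degree q"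
      by (simp add: degree_mult_eq deg_P)
    with assms(3) have "degree q = 0"
      by simp
    then obtain k where "q = [:k:]"
      by (metis degree_eq_zeroE)
    with q lead_P show ?thesis
      by (simp add: lead_coeff_mult)
  qed (use q in simp)
qed

lemma poly_eq_smult_prod_ordered_roots:
  fixes p :: "real poly"
  assumes "strict_mono_on {1..m} x" "\<forall>i\<in>{1..m}. poly p (x i) = 0" "degree p = m"
  shows "p = smult (lead_coeff p) (\<Prod>i=1..m. [:-x i, 1:])"
proof -
  have inj: "inj_on x {1..m}"
    using assms(1) by (rule strict_mono_on_imp_inj_on)
  have "p = smult (lead_coeff p) (\<Prod>s\<in>x ` {1..m}. [:-s, 1:])"
    using assms inj by (intro poly_eq_smult_prod_roots) (auto simp: card_image)
  also have "(\<Prod>s\<in>x ` {1..m}. [:-s, 1:]) = (\<Prod>i=1..m. [:-x i, 1:])"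
    using inj by (simp add: prod.reindex)
  finally show ?thesis .
qed

lemma strict_mono_on_atLeastAtMost_SucI:
  fixes x :: "nat \<Rightarrow> 'a :: order"
  assumes "\<And>i. 1 \<le> i \<Longrightarrow> i < m \<Longrightarrow> x i < x (Suc i)"
  shows "strict_mono_on {1..m} x"
proof (rule strict_mono_onI)
  fix r s
  assume "r \<in> {1..m}" "s \<in> {1..m}" "r < s"
  then have "Suc r \<le> s" "1 \<le> r" "s \<le> m" by auto
  then show "x r < x s"
  proof (induction s rule: dec_induct)
    case (step k)
    then show ?case using assms[of k] by auto
  qed (use assms in auto)
qed

definition ordered_roots_in :: "real \<Rightarrow> real \<Rightarrow> real poly \<Rightarrow> nat \<Rightarrow> (nat \<Rightarrow> real) \<Rightarrow> bool" where
  "ordered_roots_in a b p n x \<longleftrightarrow>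
     p \<noteq> 0 \<and> p = smult (lead_coeff p) (\<Prod>i=1..n. [:-x i, 1:])
     \<and> strict_mono_on {1..n} x \<and> (\<forall>i\<in>{1..n}. a < x i \<and> x i < b)"

definition interlaced_by :: "(nat \<Rightarrow> real) \<Rightarrow> (nat \<Rightarrow> real) \<Rightarrow> nat \<Rightarrow> bool" where
  "interlaced_by x y n \<longleftrightarrow> (\<forall>i\<in>{1..n}. y i < x i \<and> x i < y (Suc i))"

lemma ordered_roots_in_nonzero_constant:
  assumes "p \<noteq> 0" "degree p = 0"
  shows "ordered_roots_in a b p 0 x"
  using assms unfolding ordered_roots_in_def by (auto elim: degree_eq_zeroE)

lemma ordered_roots_inD:
  assumes "ordered_roots_in a b p n x"
  shows "p \<noteq> 0" "p = smult (lead_coeff p) (\<Prod>i=1..n. [:-x i, 1:])"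
    and "strict_mono_on {1..n} x" "\<And>i. i \<in> {1..n} \<Longrightarrow> a < x i \<and> x i < b"
  using assms unfolding ordered_roots_in_def by blast+

lemma ordered_roots_in_degree:
  assumes "ordered_roots_in a b p n x"
  shows "degree p = n"
proof -
  have "degree (\<Prod>i=1..n. [:-x i, 1:]) = n"
    by (subst degree_prod_sum_eq) auto
  with ordered_roots_inD(1,2)[OF assms] show ?thesis
    by (metis degree_smult_eq leading_coeff_0_iff)
qed

lemma ordered_roots_in_poly:
  assumes "ordered_roots_in a b p n x"
  shows "poly p t = lead_coeff p * (\<Prod>j=1..n. t - x j)"
proof -
  have "poly p t = poly (smult (lead_coeff p) (\<Prod>j=1..n. [:-x j, 1:])) t"
    using ordered_roots_inD(2)[OF assms] by (rule arg_cong)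
  then show ?thesis by (simp add: poly_prod)
qed

lemma ordered_roots_in_root:
  assumes "ordered_roots_in a b p n x" "i \<in> {1..n}"
  shows "poly p (x i) = 0"
  using assms by (auto simp: ordered_roots_in_poly intro: prod_zero)

lemma ordered_roots_in_poly_mult_poly:
  assumes "ordered_roots_in a b p n x"
  shows "poly p u * poly p v = (lead_coeff p)\<^sup>2 * (\<Prod>j=1..n. (u - x j) * (v - x j))"
  by (simp add: ordered_roots_in_poly[OF assms] prod.distrib power2_eq_square mult_ac)

lemma ordered_roots_in_poly_mult_poly_pos:
  assumes "ordered_roots_in a b p n x" "u \<le> v" "\<forall>j\<in>{1..n}. x j < u \<or> v < x j"
  shows "poly p u * poly p v > 0"
proof -
  have "lead_coeff p \<noteq> 0"
    using ordered_roots_inD(1)[OF assms(1)] by simp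
  moreover have "(\<Prod>j=1..n. (u - x j) * (v - x j)) > 0"
    using assms(2,3) by (intro prod_pos) (force simp: zero_less_mult_iff)
  ultimately show ?thesis
    unfolding ordered_roots_in_poly_mult_poly[OF assms(1)] by simp
qed

lemma ordered_roots_in_poly_mult_poly_neg:
  assumes "ordered_roots_in a b p n x" "k \<in> {1..n}" "u < x k" "x k < v"
    and "\<forall>j\<in>{1..n} - {k}. x j < u \<or> v < x j"
  shows "poly p u * poly p v < 0"
proof -
  have "lead_coeff p \<noteq> 0"
    using ordered_roots_inD(1)[OF assms(1)] by simp
  have "(\<Prod>j\<in>{1..n} - {k}. (u - x j) * (v - x j)) > 0"
    using assms(3-5) by (intro prod_pos) (force simp: zero_less_mult_iff)
  moreover have "(u - x k) * (v - x k) < 0"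
    using assms(3,4) by (simp add: mult_neg_pos)
  ultimately have "(\<Prod>j=1..n. (u - x j) * (v - x j)) < 0"
    using assms(2) by (simp add: prod.remove mult_neg_pos)
  with \<open>lead_coeff p \<noteq> 0\<close> show ?thesis
    unfolding ordered_roots_in_poly_mult_poly[OF assms(1)] by (simp add: mult_pos_neg)
qed

lemma interlaced_by_order:
  assumes "strict_mono_on {1..Suc n} y" "interlaced_by x y n"
    and "i \<in> {1..Suc n}" "j \<in> {1..n}"
  shows "j < i \<Longrightarrow> x j < y i" and "i \<le> j \<Longrightarrow> y i < x j"
proof -
  have x_j: "y j < x j" "x j < y (Suc j)"
    using assms(2,4) unfolding interlaced_by_def by auto
  show "x j < y i" if "j < i"
    using strict_mono_onD[OF assms(1), of "Suc j" i] assms(3,4) that x_j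
    by (cases "Suc j = i") auto
  show "y i < x j" if "i \<le> j"
    using strict_mono_onD[OF assms(1), of i j] assms(3,4) that x_j
    by (cases "i = j") auto
qed

lemma interlaced_by_sign_change:
  assumes r: "ordered_roots_in a b r n x"
    and y_mono: "strict_mono_on {1..Suc n} y" and interlaced: "interlaced_by x y n"
    and i: "i \<in> {1..n}"
  shows "poly r (y i) * poly r (y (Suc i)) < 0"
proof (rule ordered_roots_in_poly_mult_poly_neg[OF r i])
  show "y i < x i" "x i < y (Suc i)"
    using interlaced i by (auto simp: interlaced_by_def)
  show "\<forall>j\<in>{1..n} - {i}. x j < y i \<or> y (Suc i) < x j"
  proof
    fix j assume j: "j \<in> {1..n} - {i}"
    show "x j < y i \<or> y (Suc i) < x j"
    proof (cases "j < i")
      case True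
      with i j show ?thesis
        using interlaced_by_order(1)[OF y_mono interlaced, of i j] by auto
    next
      case False
      with i j show ?thesis
        using interlaced_by_order(2)[OF y_mono interlaced, of "Suc i" j] by auto
    qed
  qed
qed

lemma interlaced_by_no_sign_change_below:
  assumes r: "ordered_roots_in a b r n x"
    and y_mono: "strict_mono_on {1..Suc n} y" and interlaced: "interlaced_by x y n"
    and "a \<le> y 1"
  shows "poly r a * poly r (y 1) > 0"
  using interlaced_by_order(2)[OF y_mono interlaced, of 1] assms(4)
  by (intro ordered_roots_in_poly_mult_poly_pos[OF r]) auto

lemma interlaced_by_no_sign_change_above:
  assumes r: "ordered_roots_in a b r n x"
    and y_mono: "strict_mono_on {1..Suc n} y" and interlaced: "interlaced_by x y n"
    and "y (Suc n) \<le> b"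
  shows "poly r (y (Suc n)) * poly r b > 0"
  using interlaced_by_order(1)[OF y_mono interlaced, of "Suc n"] assms(4)
  by (intro ordered_roots_in_poly_mult_poly_pos[OF r]) auto

lemma ordered_roots_in_of_sign_changes:
  fixes a b :: real and m :: nat and p :: "real poly" and y :: "nat \<Rightarrow> real"
  defines "c \<equiv> \<lambda>i. if i = 0 then a else if i = Suc m then b else y i"
  assumes y_bounds: "\<forall>i\<in>{1..m}. a < y i \<and> y i < b" and deg: "degree p = Suc m"
    and sign_changes: "\<And>i. i \<le> m \<Longrightarrow> c i < c (Suc i) \<and> poly p (c i) * poly p (c (Suc i)) < 0"
  shows "\<exists>x. ordered_roots_in a b p (Suc m) x \<and> interlaced_by y x m"
proof -
  have "\<forall>i. \<exists>t. i \<le> m \<longrightarrow> c i < t \<and> t < c (Suc i) \<and> poly p t = 0"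
    using sign_changes poly_IVT by blast
  then obtain t where t: "\<And>i. i \<le> m \<Longrightarrow> c i < t i \<and> t i < c (Suc i) \<and> poly p (t i) = 0"
    by (metis choice)
  define x where "x i = t (i - 1)" for i
  have interlaced: "interlaced_by y x m"
    unfolding interlaced_by_def
  proof
    fix i assume "i \<in> {1..m}"
    then obtain k where k: "i = Suc k" "Suc k \<le> m"
      by (cases i) auto
    with t[of k] t[of i] show "x i < y i \<and> y i < x (Suc i)"
      by (auto simp: x_def c_def)
  qed
  have mono: "strict_mono_on {1..Suc m} x"
  proof (rule strict_mono_on_atLeastAtMost_SucI)
    fix i assume "1 \<le> i" "i < Suc m"
    with interlaced have "x i < y i" "y i < x (Suc i)"
      unfolding interlaced_by_def by auto
    then show "x i < x (Suc i)"
      by (rule less_trans)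
  qed
  have c_bounds: "a \<le> c i \<and> c (Suc i) \<le> b" if "i \<le> m" for i
    using y_bounds that by (auto simp: c_def less_imp_le)
  have bounds: "\<forall>i\<in>{1..Suc m}. a < x i \<and> x i < b"
  proof
    fix i assume "i \<in> {1..Suc m}"
    then have "i - 1 \<le> m" by auto
    from t[OF this] c_bounds[OF this] show "a < x i \<and> x i < b"
      by (auto simp: x_def)
  qed
  have roots: "\<forall>i\<in>{1..Suc m}. poly p (x i) = 0"
    using t by (auto simp: x_def)
  have "p \<noteq> 0"
    using deg by auto
  with mono bounds poly_eq_smult_prod_ordered_roots[OF mono roots deg]
  have "ordered_roots_in a b p (Suc m) x"
    unfolding ordered_roots_in_def by blast
  with interlaced show ?thesis by blast
qed

lemma mult_pos_two_apart:
  fixes u :: "nat \<Rightarrow> real"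
  assumes "(\<forall>n. u n * u (Suc n) > 0) \<or> (\<forall>n. u n * u (Suc n) < 0)"
  shows "u n * u (Suc (Suc n)) > 0"
proof -
  have "(u n * u (Suc n) > 0 \<and> u (Suc n) * u (Suc (Suc n)) > 0)
      \<or> (u n * u (Suc n) < 0 \<and> u (Suc n) * u (Suc (Suc n)) < 0)"
    using assms by auto
  then show ?thesis
    by (auto simp: zero_less_mult_iff mult_less_0_iff)
qed

lemma degree_linear_mult_diff:
  fixes q r :: "'a :: idom poly"
  assumes "\<alpha> \<noteq> 0" "q \<noteq> 0" "degree r < Suc (degree q)"
  shows "degree ([:\<beta>, \<alpha>:] * q - r) = Suc (degree q)"
proof -
  have "degree ([:\<beta>, \<alpha>:] * q) = degree [:\<beta>, \<alpha>:] + degree q"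
    using assms(1,2) by (intro degree_mult_eq) auto
  with assms(1) have deg: "degree ([:\<beta>, \<alpha>:] * q) = Suc (degree q)"
    by simp
  have "degree ([:\<beta>, \<alpha>:] * q + - r) = Suc (degree q)"
    using assms(3) unfolding deg[symmetric] by (intro degree_add_eq_left) simp
  then show ?thesis
    by (simp only: diff_conv_add_uminus)
qed

lemma ordered_roots_in_three_term_recurrence:
  fixes p q r :: "real poly"
  assumes "\<alpha> \<noteq> 0"
    and r: "ordered_roots_in a b r n x" and q: "ordered_roots_in a b q (Suc n) y"
    and interlaced: "interlaced_by x y n"
    and p_def: "p = [:\<beta>, \<alpha>:] * q - r"
    and sign_a: "poly r a * poly p a > 0" and sign_b: "poly r b * poly p b > 0"
  shows "\<exists>z. ordered_roots_in a b p (Suc (Suc n)) z \<and> interlaced_by y z (Suc n)"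
proof -
  have y_mono: "strict_mono_on {1..Suc n} y"
    and y_bounds: "\<forall>i\<in>{1..Suc n}. a < y i \<and> y i < b"
    using ordered_roots_inD(3,4)[OF q] by auto
  have "degree p = Suc (degree q)"
    unfolding p_def using \<open>\<alpha> \<noteq> 0\<close> ordered_roots_inD(1)[OF q]
    by (rule degree_linear_mult_diff) (simp add: ordered_roots_in_degree[OF q] ordered_roots_in_degree[OF r])
  then have deg: "degree p = Suc (Suc n)"
    by (simp add: ordered_roots_in_degree[OF q])
  have p_at_y: "poly p (y i) = - poly r (y i)" if "i \<in> {1..Suc n}" for i
    using ordered_roots_in_root[OF q that] by (simp add: p_def)
  define c where "c i = (if i = 0 then a else if i = Suc (Suc n) then b else y i)" for i
  have "c i < c (Suc i) \<and> poly p (c i) * poly p (c (Suc i)) < 0" if i: "i \<le> Suc n" for i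
  proof -
    consider "i = 0" | "i = Suc n" | "i \<in> {1..n}"
      using i by fastforce
    then show ?thesis
    proof cases
      case 1
      have "poly r a * poly r (y 1) > 0"
        using y_bounds by (intro interlaced_by_no_sign_change_below[OF r y_mono interlaced]) (auto simp: less_imp_le)
      with sign_a have "poly p a * poly r (y 1) > 0"
        by (auto simp: zero_less_mult_iff)
      with 1 y_bounds p_at_y[of 1] show ?thesis
        by (simp add: c_def mult_pos_neg)
    next
      case 2
      have "poly r (y (Suc n)) * poly r b > 0"
        using y_bounds by (intro interlaced_by_no_sign_change_above[OF r y_mono interlaced]) (auto simp: less_imp_le)
      with sign_b have "poly r (y (Suc n)) * poly p b > 0"
        by (auto simp: zero_less_mult_iff)
      with 2 y_bounds p_at_y[of "Suc n"] show ?thesis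
        by (simp add: c_def mult_pos_neg)
    next
      case 3
      with interlaced_by_sign_change[OF r y_mono interlaced 3] p_at_y[of i] p_at_y[of "Suc i"]
        strict_mono_onD[OF y_mono, of i "Suc i"]
      show ?thesis
        by (simp add: c_def)
    qed
  qed
  then show ?thesis
    using ordered_roots_in_of_sign_changes[OF y_bounds deg] unfolding c_def by blast
qed

lemma ordered_roots_in_recurrence_sequence:
  fixes R :: "nat \<Rightarrow> real poly"
  assumes "\<alpha> \<noteq> 0"
    and rec: "\<And>n. R (Suc (Suc n)) = [:\<beta>, \<alpha>:] * R (Suc n) - R n"
    and sign_a: "\<And>n. poly (R n) a * poly (R (Suc (Suc n))) a > 0"
    and sign_b: "\<And>n. poly (R n) b * poly (R (Suc (Suc n))) b > 0"
    and "a < b" "R 0 \<noteq> 0" "degree (R 0) = 0" "degree (R 1) = 1"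
    and R1_sign_change: "poly (R 1) a * poly (R 1) b < 0"
  shows "\<exists>x. \<forall>n. ordered_roots_in a b (R n) n (x n) \<and> interlaced_by (x n) (x (Suc n)) n"
proof -
  obtain x0 where R0: "ordered_roots_in a b (R 0) 0 x0"
    using ordered_roots_in_nonzero_constant \<open>R 0 \<noteq> 0\<close> \<open>degree (R 0) = 0\<close> by blast
  obtain x1 where R1: "ordered_roots_in a b (R 1) 1 x1"
    using ordered_roots_in_of_sign_changes[where m = 0 and p = "R 1" and a = a and b = b]
      \<open>a < b\<close> \<open>degree (R 1) = 1\<close> R1_sign_change by auto
  define next_roots where "next_roots n y =
      (SOME z. ordered_roots_in a b (R (Suc (Suc n))) (Suc (Suc n)) z \<and> interlaced_by y z (Suc n))"
    for n y
  define x where "x n = (case n of 0 \<Rightarrow> x0 | Suc m \<Rightarrow> rec_nat x1 next_roots m)" for n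
  have x_Suc_Suc: "x (Suc (Suc n)) = next_roots n (x (Suc n))" for n
    by (simp add: x_def)
  have "ordered_roots_in a b (R n) n (x n) \<and> ordered_roots_in a b (R (Suc n)) (Suc n) (x (Suc n))
        \<and> interlaced_by (x n) (x (Suc n)) n" for n
  proof (induction n)
    case 0
    show ?case
      using R0 R1 by (simp add: x_def interlaced_by_def)
  next
    case (Suc n)
    then have "\<exists>z. ordered_roots_in a b (R (Suc (Suc n))) (Suc (Suc n)) z
                 \<and> interlaced_by (x (Suc n)) z (Suc n)"
      using sign_a sign_b
      by (intro ordered_roots_in_three_term_recurrence[OF \<open>\<alpha> \<noteq> 0\<close> _ _ _ rec]) auto
    then have "ordered_roots_in a b (R (Suc (Suc n))) (Suc (Suc n)) (x (Suc (Suc n)))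
               \<and> interlaced_by (x (Suc n)) (x (Suc (Suc n))) (Suc n)"
      unfolding x_Suc_Suc next_roots_def by (rule someI_ex)
    with Suc.IH show ?case by simp
  qed
  then show ?thesis by blast
qed

theorem proposition5:
  fixes a b \<alpha> \<beta> :: real and R :: "nat \<Rightarrow> real poly"
  assumes "a < b"
    and "degree (R 0) = 0" and "degree (R 1) = 1"
    and "\<alpha> \<noteq> 0"
    and "\<forall>n\<ge>2. R n = [:\<beta>, \<alpha>:] * R (n - 1) - R (n - 2)"
    and "(\<forall>n. poly (R n) a * poly (R (n + 1)) a > 0 \<and> poly (R n) b * poly (R (n + 1)) b < 0)
       \<or> (\<forall>n. poly (R n) a * poly (R (n + 1)) a < 0 \<and> poly (R n) b * poly (R (n + 1)) b > 0)"
  shows "\<exists>x :: nat \<Rightarrow> nat \<Rightarrow> real.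
           (\<forall>n. degree (R n) = n)
         \<and> (\<forall>n. R n = smult (lead_coeff (R n)) (\<Prod>i = 1..n. [:- x n i, 1:]))
         \<and> (\<forall>n. strict_mono_on {1..n} (x n))
         \<and> (\<forall>n\<ge>1. a < x n 1 \<and> x n n < b)
         \<and> (\<forall>n. \<forall>i\<in>{1..n}. x (n + 1) i < x n i \<and> x n i < x (n + 1) (i + 1))"
proof -
  let ?s = "\<lambda>t n. poly (R n) t * poly (R (Suc n)) t"
  have rec: "R (Suc (Suc n)) = [:\<beta>, \<alpha>:] * R (Suc n) - R n" for n
    using assms(5) by (auto dest: spec[of _ "Suc (Suc n)"])
  have "(\<forall>n. ?s a n > 0) \<or> (\<forall>n. ?s a n < 0)" "(\<forall>n. ?s b n > 0) \<or> (\<forall>n. ?s b n < 0)"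
    using assms(6) by auto
  then have sign_a: "poly (R n) a * poly (R (Suc (Suc n))) a > 0"
    and sign_b: "poly (R n) b * poly (R (Suc (Suc n))) b > 0" for n
    by (auto intro: mult_pos_two_apart)
  have "poly (R 0) b = poly (R 0) a"
    using assms(2) by (elim degree_eq_zeroE) simp
  moreover have "(poly (R 0) a * poly (R 1) a > 0 \<and> poly (R 0) b * poly (R 1) b < 0)
      \<or> (poly (R 0) a * poly (R 1) a < 0 \<and> poly (R 0) b * poly (R 1) b > 0)"
    using assms(6) by auto
  ultimately have "R 0 \<noteq> 0" and R1_sign_change: "poly (R 1) a * poly (R 1) b < 0"
    by (auto simp: zero_less_mult_iff mult_less_0_iff)
  obtain x where x: "\<And>n. ordered_roots_in a b (R n) n (x n) \<and> interlaced_by (x n) (x (Suc n)) n"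
    using ordered_roots_in_recurrence_sequence[OF assms(4) rec sign_a sign_b assms(1)
        \<open>R 0 \<noteq> 0\<close> assms(2,3) R1_sign_change]
    by auto
  show ?thesis
  proof (intro exI[of _ x] conjI allI impI ballI)
    fix n
    show "degree (R n) = n"
      using x ordered_roots_in_degree by blast
    show "R n = smult (lead_coeff (R n)) (\<Prod>i = 1..n. [:- x n i, 1:])"
      and "strict_mono_on {1..n} (x n)"
      using ordered_roots_inD(2,3) x by blast+
  next
    fix n :: nat assume "1 \<le> n"
    with ordered_roots_inD(4)[OF x[THEN conjunct1]] show "a < x n 1" "x n n < b"
      by auto
  next
    fix n i :: nat assume "i \<in> {1..n}"
    with x[of n] show "x (n + 1) i < x n i" "x n i < x (n + 1) (i + 1)"
      by (auto simp: interlaced_by_def)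
  qed
qed

end
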